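(* For every $M\in\mathbb N$ and every prime power $q$, for almost all $a\in(\mathbb F_q^M)^\infty$ (uniform product measure), $$\lim_{n\to\infty}\frac{L_a(n)}{n}=\frac{M}{M+1}.$$
   Context: Let $q$ be a prime power and $M\ge1$. For $a=(a_{k,m})_{k\ge1,\,1\le m\le M}\in(\mathbb F_q^M)^\infty$ and $n\in\mathbb N_0$, the linear complexity $L_a(n)$ is the least $L\ge0$ such that there exist $c_1,\dots,c_L\in\mathbb F_q$ with $a_{k,m}=\sum_{i=1}^L c_i a_{k-i,m}$ for all $L<k\le n$ and all $1\le m\le M$ (a single linear feedback shift register of length $L$ generating the first $n$ terms of all $M$ sequences); $L_a(0)=0$. *)

theory Defs
  imports "HOL-Probability.Probability"
begin

text \<open>Linear complexity of a multisequence a = (a k m), k >= 1 (time), m :: 'm (one of the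
  M = CARD('m) component sequences), over a field 'a: the least L such that some
  coefficients c 1, ..., c L satisfy a k m = sum_{i=1..L} c i * a (k - i) m
  for all L < k <= n and all m.  The value a 0 is never used.\<close>

definition lin_compl :: "(nat \<Rightarrow> 'm \<Rightarrow> 'a::field) \<Rightarrow> nat \<Rightarrow> nat" where
  "lin_compl a n = (LEAST L. \<exists>c :: nat \<Rightarrow> 'a. \<forall>k. L < k \<and> k \<le> n \<longrightarrow>
      (\<forall>m. a k m = (\<Sum>i = 1..L. c i * a (k - i) m)))"

end

(* Prefixes of length n with linear complexity at most L are determined by the L feedback
   coefficients and the L initial vectors, so there are at most q^(L (M + 1)) of the q^(M n)
   prefixes.  If the linear complexity exceeds L, the linear system for the feedback coefficients
   is inconsistent, so by the Fredholm alternative some nonzero y annihilates the L shifted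
   columns; for fixed y these L equations determine L of the entries from the others, which
   leaves at most q^((n - L) M) * q^(n M - L) prefixes.  Both counts are exponentially small
   relative to q^(M n) as soon as L / n stays away from M / (M + 1) on the respective side, and
   the Borel-Cantelli lemma turns this into almost sure convergence of L_a(n) / n. *)

theory Submission
  imports Defs
begin

section \<open>The Fredholm alternative over a field\<close>

lemma fredholm_alternative:
  fixes A :: "'r \<Rightarrow> 'c \<Rightarrow> 'a::field"
  assumes "finite I" "finite J"
  shows "(\<exists>c. \<forall>r\<in>I. (\<Sum>j\<in>J. A r j * c j) = b r) \<or>
         (\<exists>y. (\<forall>j\<in>J. (\<Sum>r\<in>I. y r * A r j) = 0) \<and> (\<Sum>r\<in>I. y r * b r) \<noteq> 0)"
  using assms(2)
proof (induction J arbitrary: b rule: finite_induct)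
  case empty
  show ?case
  proof (cases "\<forall>r\<in>I. b r = 0")
    case False
    then obtain r0 where "r0 \<in> I" "b r0 \<noteq> 0" by blast
    moreover have "(\<Sum>r\<in>I. of_bool (r = r0) * b r) = (\<Sum>r\<in>I. if r = r0 then b r else 0)"
      by (rule sum.cong) auto
    ultimately have "(\<Sum>r\<in>I. of_bool (r = r0) * b r) \<noteq> 0"
      using assms(1) by simp
    then show ?thesis by (intro disjI2 exI[of _ "\<lambda>r. of_bool (r = r0)"]) simp
  qed simp
next
  case (insert j0 J)
  txt \<open>If the system without column \<open>j0\<close> is inconsistent, with certificate \<open>y1\<close>, move \<open>b\<close>
    along column \<open>j0\<close> until \<open>y1\<close> is orthogonal to it; either the moved system is solvable, or
    its certificate \<open>y2\<close> minus a multiple of \<open>y1\<close> is orthogonal to column \<open>j0\<close> as well.\<close>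
  let ?dot = "\<lambda>y v. \<Sum>r\<in>I. y r * v r :: 'a"
  have dot_diff: "?dot (\<lambda>r. y r - s * y' r) v = ?dot y v - s * ?dot y' v" for y y' s v
    by (simp add: left_diff_distrib sum_subtractf sum_distrib_left mult.assoc)
  have dot_diff': "?dot y (\<lambda>r. v r - t * v' r) = ?dot y v - t * ?dot y v'" for y v v' t
    by (simp add: right_diff_distrib sum_subtractf sum_distrib_left mult.left_commute)
  show ?case
  proof (cases "\<exists>c. \<forall>r\<in>I. (\<Sum>j\<in>J. A r j * c j) = b r")
    case True
    then obtain c where c: "\<forall>r\<in>I. (\<Sum>j\<in>J. A r j * c j) = b r" by blast
    have "(\<Sum>j\<in>insert j0 J. A r j * (c(j0 := 0)) j) = (\<Sum>j\<in>J. A r j * c j)" for r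
      using insert.hyps by (auto intro!: sum.cong)
    with c show ?thesis by metis
  next
    case False
    with insert.IH obtain y1 where y1: "\<forall>j\<in>J. ?dot y1 (\<lambda>r. A r j) = 0" "?dot y1 b \<noteq> 0"
      by blast
    show ?thesis
    proof (cases "?dot y1 (\<lambda>r. A r j0) = 0")
      case True
      with y1 show ?thesis by auto
    next
      case y1j0: False
      define t where "t = ?dot y1 b / ?dot y1 (\<lambda>r. A r j0)"
      from insert.IH[of "\<lambda>r. b r - t * A r j0"] show ?thesis
      proof
        assume "\<exists>c. \<forall>r\<in>I. (\<Sum>j\<in>J. A r j * c j) = b r - t * A r j0"
        then obtain c where c: "\<forall>r\<in>I. (\<Sum>j\<in>J. A r j * c j) = b r - t * A r j0" by blast
        have "(\<Sum>j\<in>insert j0 J. A r j * (c(j0 := t)) j) = b r" if "r \<in> I" for r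
        proof -
          have "(\<Sum>j\<in>insert j0 J. A r j * (c(j0 := t)) j) = A r j0 * t + (\<Sum>j\<in>J. A r j * c j)"
            using insert.hyps by (auto intro!: sum.cong)
          also have "\<dots> = b r" using c that by simp
          finally show ?thesis .
        qed
        then show ?thesis by blast
      next
        assume "\<exists>y. (\<forall>j\<in>J. ?dot y (\<lambda>r. A r j) = 0) \<and> ?dot y (\<lambda>r. b r - t * A r j0) \<noteq> 0"
        then obtain y2 where y2: "\<forall>j\<in>J. ?dot y2 (\<lambda>r. A r j) = 0"
          "?dot y2 (\<lambda>r. b r - t * A r j0) \<noteq> 0" by blast
        define s where "s = ?dot y2 (\<lambda>r. A r j0) / ?dot y1 (\<lambda>r. A r j0)"
        define y where "y = (\<lambda>r. y2 r - s * y1 r)"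
        have "\<forall>j\<in>insert j0 J. ?dot y (\<lambda>r. A r j) = 0"
          using y1 y2 y1j0 unfolding y_def dot_diff by (simp add: s_def)
        moreover have "?dot y b = ?dot y2 (\<lambda>r. b r - t * A r j0)"
        proof -
          have "s * ?dot y1 b = t * ?dot y2 (\<lambda>r. A r j0)" by (simp add: s_def t_def)
          then show ?thesis unfolding y_def dot_diff dot_diff' by simp
        qed
        ultimately show ?thesis using y2 by auto
      qed
    qed
  qed
qed

section \<open>Cylinder sets of uniformly random sequences\<close>

abbreviation uniform_sequences :: "(nat \<Rightarrow> 'b::finite) measure" where
  "uniform_sequences \<equiv> \<Pi>\<^sub>M k\<in>{1::nat..}. measure_pmf (pmf_of_set UNIV)"

definition cylinder :: "nat \<Rightarrow> (nat \<Rightarrow> 'b::finite) set \<Rightarrow> (nat \<Rightarrow> 'b) set" where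
  "cylinder n S =
    (\<Union>x\<in>S. prod_emb {1..} (\<lambda>_. measure_pmf (pmf_of_set UNIV)) {1..n} (\<Pi>\<^sub>E k\<in>{1..n}. {x k}))"

lemma prob_space_uniform_sequences: "prob_space uniform_sequences"
  by (rule prob_space_PiM) (simp add: prob_space_measure_pmf)

lemma cylinder_in_sets: "finite S \<Longrightarrow> cylinder n S \<in> sets uniform_sequences"
  unfolding cylinder_def by (intro sets.finite_UN sets_PiM_I) auto

lemma in_cylinderI:
  assumes "a \<in> space uniform_sequences" "restrict a {1..n} \<in> S"
  shows "a \<in> cylinder n S"
  using assms unfolding cylinder_def prod_emb_def
  by (auto simp: space_PiM intro!: bexI[of _ "restrict a {1..n}"])

lemma measure_cylinder_le:
  fixes S :: "(nat \<Rightarrow> 'b::finite) set"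
  assumes "finite S"
  shows "measure uniform_sequences (cylinder n S) \<le> real (card S) / real CARD('b) ^ n"
proof -
  have singleton: "measure uniform_sequences
      (prod_emb {1..} (\<lambda>_. measure_pmf (pmf_of_set UNIV)) {1..n} (\<Pi>\<^sub>E k\<in>{1..n}. {x k}))
    = (1 / real CARD('b)) ^ n" for x :: "nat \<Rightarrow> 'b"
  proof -
    have "emeasure uniform_sequences
        (prod_emb {1..} (\<lambda>_. measure_pmf (pmf_of_set UNIV)) {1..n} (\<Pi>\<^sub>E k\<in>{1..n}. {x k}))
      = (\<Prod>k\<in>{1..n}. emeasure (measure_pmf (pmf_of_set UNIV)) {x k})"
      by (rule emeasure_PiM_emb) (auto simp: prob_space_measure_pmf)
    also have "\<dots> = ennreal ((1 / real CARD('b)) ^ n)"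
      by (simp add: emeasure_pmf_single ennreal_power)
    finally show ?thesis by (simp add: measure_def)
  qed
  have "measure uniform_sequences (cylinder n S) \<le> (\<Sum>x\<in>S. measure uniform_sequences
      (prod_emb {1..} (\<lambda>_. measure_pmf (pmf_of_set UNIV)) {1..n} (\<Pi>\<^sub>E k\<in>{1..n}. {x k})))"
    unfolding cylinder_def by (rule measure_UNION_le) (use assms in \<open>auto intro!: sets_PiM_I\<close>)
  also have "\<dots> = real (card S) / real CARD('b) ^ n"
    by (simp only: singleton) (simp add: power_one_over)
  finally show ?thesis .
qed

lemma AE_eventually_restrict_notin:
  fixes S :: "nat \<Rightarrow> (nat \<Rightarrow> 'b::finite) set"
  assumes "\<And>n. finite (S n)" and "summable (\<lambda>n. real (card (S n)) / real CARD('b) ^ n)"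
  shows "AE a in uniform_sequences. eventually (\<lambda>n. restrict a {1..n} \<notin> S n) sequentially"
proof -
  interpret prob_space "uniform_sequences :: (nat \<Rightarrow> 'b) measure"
    by (rule prob_space_uniform_sequences)
  have summable: "summable (\<lambda>n. measure uniform_sequences (cylinder n (S n)))"
    by (rule summable_comparison_test'[OF assms(2)]) (use measure_cylinder_le[OF assms(1)] in simp)
  have "AE a in uniform_sequences. eventually (\<lambda>n. a \<in> space uniform_sequences - cylinder n (S n)) sequentially"
  proof (rule borel_cantelli_AE1[OF _ _ summable])
    show "cylinder n (S n) \<in> sets uniform_sequences" for n
      by (rule cylinder_in_sets[OF assms(1)])
    show "emeasure uniform_sequences (cylinder n (S n)) < \<infinity>" for n
      using emeasure_finite[of "cylinder n (S n)"] by (simp add: less_top)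
  qed
  then show ?thesis
    by (rule AE_mp) (auto intro!: AE_I2 elim!: eventually_mono dest: in_cylinderI)
qed

lemma AE_eventually_restrict_notin_geometric:
  fixes S :: "nat \<Rightarrow> (nat \<Rightarrow> 'b::finite) set" and C r :: real
  assumes "\<And>n. S n \<subseteq> {1..n} \<rightarrow>\<^sub>E UNIV"
    and "\<And>n. real (card (S n)) / real CARD('b) ^ n \<le> C * r ^ n" and "0 \<le> r" "r < 1"
  shows "AE a in uniform_sequences. eventually (\<lambda>n. restrict a {1..n} \<notin> S n) sequentially"
proof (rule AE_eventually_restrict_notin)
  show "finite (S n)" for n
    by (rule finite_subset[OF assms(1)]) (auto intro: finite_PiE)
  show "summable (\<lambda>n. real (card (S n)) / real CARD('b) ^ n)"
    using assms(3,4)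
    by (intro summable_comparison_test'[OF summable_mult[OF summable_geometric]]) (auto intro: assms(2))
qed

section \<open>Linear complexity via feedback shift registers\<close>

definition lfsr_generates :: "nat \<Rightarrow> nat \<Rightarrow> (nat \<Rightarrow> 'm \<Rightarrow> 'a::field) \<Rightarrow> bool" where
  "lfsr_generates L n a \<longleftrightarrow>
    (\<exists>c. \<forall>k. L < k \<and> k \<le> n \<longrightarrow> (\<forall>m. a k m = (\<Sum>i = 1..L. c i * a (k - i) m)))"

lemma lin_compl_eq_Least: "lin_compl a n = (LEAST L. lfsr_generates L n a)"
  by (simp add: lin_compl_def lfsr_generates_def)

lemma lfsr_generates_self: "lfsr_generates n n a"
  by (auto simp: lfsr_generates_def)

lemma lfsr_generates_mono:
  assumes "lfsr_generates L0 n a" "L0 \<le> L"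
  shows "lfsr_generates L n a"
proof -
  obtain c where c: "\<forall>k. L0 < k \<and> k \<le> n \<longrightarrow> (\<forall>m. a k m = (\<Sum>i = 1..L0. c i * a (k - i) m))"
    using assms(1) by (auto simp: lfsr_generates_def)
  define c' where "c' i = (if i \<le> L0 then c i else 0)" for i
  have "(\<Sum>i = 1..L. c' i * a (k - i) m) = (\<Sum>i = 1..L0. c i * a (k - i) m)" for k m
    by (rule sum.mono_neutral_cong_right) (use assms(2) in \<open>auto simp: c'_def\<close>)
  then show ?thesis
    unfolding lfsr_generates_def using c assms(2) by (intro exI[of _ c']) auto
qed

lemma lin_compl_le_iff: "lin_compl a n \<le> L \<longleftrightarrow> lfsr_generates L n a"
proof
  assume "lin_compl a n \<le> L"
  moreover have "lfsr_generates (lin_compl a n) n a"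
    unfolding lin_compl_eq_Least by (rule LeastI[of _ n]) (rule lfsr_generates_self)
  ultimately show "lfsr_generates L n a" using lfsr_generates_mono by blast
next
  assume "lfsr_generates L n a"
  then show "lin_compl a n \<le> L" unfolding lin_compl_eq_Least by (rule Least_le)
qed

lemma lin_compl_le_length: "lin_compl a n \<le> n"
  by (simp add: lin_compl_le_iff lfsr_generates_self)

lemma lfsr_generates_cong:
  assumes "\<And>k. k \<in> {1..n} \<Longrightarrow> a k = b k"
  shows "lfsr_generates L n a \<longleftrightarrow> lfsr_generates L n b"
proof -
  have shifted: "a (k - i) = b (k - i)" if "L < k" "k \<le> n" "i \<in> {1..L}" for k i
    using that by (intro assms) auto
  have "(\<Sum>i = 1..L. c i * a (k - i) m) = (\<Sum>i = 1..L. c i * b (k - i) m)"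
    if "L < k" "k \<le> n" for c k m
    using shifted[OF that] by (intro sum.cong) auto
  moreover have "a k = b k" if "L < k" "k \<le> n" for k
    using that by (intro assms) auto
  ultimately show ?thesis unfolding lfsr_generates_def by simp
qed

lemma lin_compl_restrict: "lin_compl (restrict a {1..n}) n = lin_compl a n"
proof -
  have "lfsr_generates L n (restrict a {1..n}) \<longleftrightarrow> lfsr_generates L n a" for L
    by (rule lfsr_generates_cong) simp
  then show ?thesis by (simp add: lin_compl_eq_Least)
qed

section \<open>Counting prefixes by linear complexity\<close>

lemma lfsr_recurrence_unique:
  fixes x x' :: "nat \<Rightarrow> 'm \<Rightarrow> 'a::field"
  assumes "x \<in> {1..n} \<rightarrow>\<^sub>E UNIV" "x' \<in> {1..n} \<rightarrow>\<^sub>E UNIV"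
    and rec: "\<And>k m. L < k \<Longrightarrow> k \<le> n \<Longrightarrow> x k m = (\<Sum>i = 1..L. c i * x (k - i) m)"
    and rec': "\<And>k m. L < k \<Longrightarrow> k \<le> n \<Longrightarrow> x' k m = (\<Sum>i = 1..L. c' i * x' (k - i) m)"
    and same_coeffs: "\<And>i. i \<in> {1..L} \<Longrightarrow> c i = c' i"
    and same_init: "\<And>k. k \<in> {1..L} \<Longrightarrow> x k = x' k"
  shows "x = x'"
proof
  fix k
  show "x k = x' k"
  proof (induction k rule: less_induct)
    case (less k)
    consider "k \<notin> {1..n}" | "k \<in> {1..L}" | "L < k" "k \<le> n" by fastforce
    then show ?case
    proof cases
      case 1
      with assms(1,2) show ?thesis by (metis PiE_arb)
    next
      case 2
      then show ?thesis by (rule same_init)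
    next
      case 3
      have "x (k - i) = x' (k - i)" if "i \<in> {1..L}" for i
        using that 3 by (intro less) auto
      then have "(\<Sum>i = 1..L. c i * x (k - i) m) = (\<Sum>i = 1..L. c' i * x' (k - i) m)" for m
        by (intro sum.cong) (simp_all add: same_coeffs)
      with rec[OF 3] rec'[OF 3] show ?thesis by auto
    qed
  qed
qed

lemma card_lfsr_generates_le:
  "card {x \<in> {1..n} \<rightarrow>\<^sub>E UNIV. lfsr_generates L n (x :: nat \<Rightarrow> 'm::finite \<Rightarrow> 'a::{finite,field})}
     \<le> CARD('a) ^ L * CARD('m \<Rightarrow> 'a) ^ L"
proof -
  let ?S = "{x \<in> {1..n} \<rightarrow>\<^sub>E UNIV. lfsr_generates L n (x :: nat \<Rightarrow> 'm \<Rightarrow> 'a)}"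
  let ?T = "({1..L} \<rightarrow>\<^sub>E (UNIV :: 'a set)) \<times> ({1..L} \<rightarrow>\<^sub>E (UNIV :: ('m \<Rightarrow> 'a) set))"
  define rec where
    "rec c x \<longleftrightarrow> (\<forall>k. L < k \<and> k \<le> n \<longrightarrow> (\<forall>m. x k m = (\<Sum>i = 1..L. c i * x (k - i) m)))"
    for c :: "nat \<Rightarrow> 'a" and x :: "nat \<Rightarrow> 'm \<Rightarrow> 'a"
  define coeffs where "coeffs x = (SOME c. rec c x)" for x
  have rec_coeffs: "rec (coeffs x) x" if "x \<in> ?S" for x
  proof -
    have "\<exists>c. rec c x" using that unfolding rec_def lfsr_generates_def by blast
    then show ?thesis unfolding coeffs_def by (rule someI_ex)
  qed
  have "inj_on (\<lambda>x. (restrict (coeffs x) {1..L}, restrict x {1..L})) ?S"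
  proof (rule inj_onI)
    fix x x' assume x: "x \<in> ?S" and x': "x' \<in> ?S"
      and eq: "(restrict (coeffs x) {1..L}, restrict x {1..L})
        = (restrict (coeffs x') {1..L}, restrict x' {1..L})"
    then have same_coeffs: "restrict (coeffs x) {1..L} = restrict (coeffs x') {1..L}"
      and same_init: "restrict x {1..L} = restrict x' {1..L}" by simp_all
    show "x = x'"
    proof (rule lfsr_recurrence_unique)
      show "coeffs x i = coeffs x' i" if "i \<in> {1..L}" for i
        using fun_cong[OF same_coeffs, of i] that by simp
      show "x i = x' i" if "i \<in> {1..L}" for i
        using fun_cong[OF same_init, of i] that by simp
      show "x k m = (\<Sum>i = 1..L. coeffs x i * x (k - i) m)" if "L < k" "k \<le> n" for k m
        using rec_coeffs[OF x] that unfolding rec_def by blast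
      show "x' k m = (\<Sum>i = 1..L. coeffs x' i * x' (k - i) m)" if "L < k" "k \<le> n" for k m
        using rec_coeffs[OF x'] that unfolding rec_def by blast
    qed (use x x' in auto)
  qed
  moreover have "(\<lambda>x. (restrict (coeffs x) {1..L}, restrict x {1..L})) ` ?S \<subseteq> ?T" by auto
  moreover have "finite ?T" by (intro finite_cartesian_product finite_PiE) auto
  ultimately have "card ?S \<le> card ?T" by (rule card_inj_on_le)
  also have "card ?T = CARD('a) ^ L * CARD('m \<Rightarrow> 'a) ^ L"
    by (simp add: card_cartesian_product card_PiE)
  finally show ?thesis .
qed

text \<open>The prefixes with \<open>L < lin_compl x n\<close> are those for which the linear system
  \<open>x k m = (\<Sum>i = 1..L. c i * x (k - i) m)\<close>, \<open>L < k \<le> n\<close>, in the unknowns \<open>c i\<close> is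
  inconsistent.  Its rows are indexed by \<open>(k, m)\<close> and its columns are the shifted sequences;
  \<open>shift_orthogonal L n y\<close> collects the prefixes for which \<open>y\<close> is orthogonal to every column.\<close>

definition shift_orthogonal ::
    "nat \<Rightarrow> nat \<Rightarrow> (nat \<times> 'm::finite \<Rightarrow> 'a::field) \<Rightarrow> (nat \<Rightarrow> 'm \<Rightarrow> 'a) set" where
  "shift_orthogonal L n y = {x \<in> {1..n} \<rightarrow>\<^sub>E UNIV.
     \<forall>i\<in>{1..L}. (\<Sum>r\<in>{L<..n} \<times> UNIV. y r * x (fst r - i) (snd r)) = 0}"

lemma shift_orthogonal_if_not_lfsr_generates:
  fixes x :: "nat \<Rightarrow> 'm::finite \<Rightarrow> 'a::field"
  assumes x: "x \<in> {1..n} \<rightarrow>\<^sub>E UNIV" and not_gen: "\<not> lfsr_generates L n x"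
  obtains y p where "y \<in> {L<..n} \<times> UNIV \<rightarrow>\<^sub>E UNIV" "p \<in> {L<..n} \<times> UNIV" "y p \<noteq> 0"
    "x \<in> shift_orthogonal L n y"
proof -
  let ?R = "{L<..n} \<times> (UNIV :: 'm set)"
  from fredholm_alternative[of ?R "{1..L}" "\<lambda>r j. x (fst r - j) (snd r)" "\<lambda>r. x (fst r) (snd r)"]
  consider c where "\<forall>r\<in>?R. (\<Sum>j = 1..L. x (fst r - j) (snd r) * c j) = x (fst r) (snd r)"
    | y where "\<forall>j\<in>{1..L}. (\<Sum>r\<in>?R. y r * x (fst r - j) (snd r)) = 0"
        "(\<Sum>r\<in>?R. y r * x (fst r) (snd r)) \<noteq> 0"
    by auto
  then show ?thesis
  proof cases
    case (1 c)
    then have "lfsr_generates L n x"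
      unfolding lfsr_generates_def by (intro exI[of _ c]) (auto simp: mult.commute)
    with not_gen show ?thesis by contradiction
  next
    case (2 y)
    then obtain p where p: "p \<in> ?R" "y p \<noteq> 0"
      by (metis (no_types, lifting) mult_eq_0_iff sum.neutral)
    have "(\<Sum>r\<in>?R. restrict y ?R r * f r) = (\<Sum>r\<in>?R. y r * f r)" for f :: "nat \<times> 'm \<Rightarrow> 'a"
      by (rule sum.cong) auto
    with 2 x have "x \<in> shift_orthogonal L n (restrict y ?R)"
      by (simp add: shift_orthogonal_def)
    with p show ?thesis by (intro that[of "restrict y ?R" p]) auto
  qed
qed

lemma shift_orthogonal_solve:
  fixes y :: "nat \<times> 'm::finite \<Rightarrow> 'a::field"
  assumes "x \<in> shift_orthogonal L n y" "i \<in> {1..L}" "p \<in> {L<..n} \<times> UNIV"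
  shows "y p * x (fst p - i) (snd p) = - (\<Sum>r\<in>{L<..n} \<times> UNIV - {p}. y r * x (fst r - i) (snd r))"
proof -
  have "(\<Sum>r\<in>{L<..n} \<times> UNIV. y r * x (fst r - i) (snd r)) = 0"
    using assms(1,2) by (simp add: shift_orthogonal_def)
  then show ?thesis
    using sum.remove[of "{L<..n} \<times> UNIV" p "\<lambda>r. y r * x (fst r - i) (snd r)"] assms(3)
    by (simp add: eq_neg_iff_add_eq_0)
qed

lemma shift_orthogonal_eqI:
  fixes y :: "nat \<times> 'm::finite \<Rightarrow> 'a::field"
  assumes x: "x \<in> shift_orthogonal L n y" and x': "x' \<in> shift_orthogonal L n y"
    and pivot: "ks \<in> {L<..n}" "y (ks, m0) \<noteq> 0"
    and pivot_last: "\<And>k. k \<in> {L<..n} \<Longrightarrow> y (k, m0) \<noteq> 0 \<Longrightarrow> k \<le> ks"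
    and agree: "\<And>k m. k \<in> {1..n} \<Longrightarrow> (k, m) \<notin> (\<lambda>i. (ks - i, m0)) ` {1..L} \<Longrightarrow> x k m = x' k m"
  shows "x = x'"
proof
  let ?R = "{L<..n} \<times> (UNIV :: 'm set)"
  have x_ext: "x \<in> {1..n} \<rightarrow>\<^sub>E UNIV" "x' \<in> {1..n} \<rightarrow>\<^sub>E UNIV"
    using x x' by (simp_all add: shift_orthogonal_def)
  fix k
  show "x k = x' k"
  proof (induction k rule: less_induct)
    case (less k)
    show ?case
    proof
      fix m
      consider "k \<notin> {1..n}" | "k \<in> {1..n}" "(k, m) \<notin> (\<lambda>i. (ks - i, m0)) ` {1..L}"
        | i where "i \<in> {1..L}" "k = ks - i" "m = m0"
        by (cases "(k, m) \<in> (\<lambda>i. (ks - i, m0)) ` {1..L}") auto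
      then show "x k m = x' k m"
      proof cases
        case 1
        with x_ext show ?thesis by (metis PiE_arb)
      next
        case 2
        then show ?thesis by (rule agree)
      next
        case (3 i)
        txt \<open>The \<open>i\<close>-th equation solves for \<open>x k m0\<close> through the other rows, whose entries
          are either off the pivots or, since \<open>ks\<close> is the last row of \<open>y\<close> in column \<open>m0\<close>,
          at strictly earlier times.\<close>
        have others: "(\<Sum>r\<in>?R - {(ks, m0)}. y r * x (fst r - i) (snd r))
          = (\<Sum>r\<in>?R - {(ks, m0)}. y r * x' (fst r - i) (snd r))"
        proof (rule sum.cong[OF refl])
          fix r assume r: "r \<in> ?R - {(ks, m0)}"
          obtain kr mr where r_eq: "r = (kr, mr)" by fastforce
          have kr: "L < kr" "kr \<le> n" using r by (auto simp: r_eq)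
          have "x (kr - i) mr = x' (kr - i) mr" if "y r \<noteq> 0"
          proof (cases "mr = m0")
            case True
            then have "kr < ks" using r pivot_last[of kr] kr that by (force simp: r_eq)
            then have "kr - i < k" using kr 3 by auto
            then show ?thesis using less by simp
          next
            case False
            then show ?thesis using kr 3(1) by (intro agree) auto
          qed
          then show "y r * x (fst r - i) (snd r) = y r * x' (fst r - i) (snd r)"
            by (cases "y r = 0") (auto simp: r_eq)
        qed
        have "y (ks, m0) * x k m = y (ks, m0) * x' k m"
          using shift_orthogonal_solve[OF x 3(1), of "(ks, m0)"]
            shift_orthogonal_solve[OF x' 3(1), of "(ks, m0)"] others pivot(1) 3(2,3)
          by simp
        with pivot(2) show ?thesis by simp
      qed
    qed
  qed
qed

lemma card_shift_orthogonal_le: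
  fixes y :: "nat \<times> 'm::finite \<Rightarrow> 'a::{finite,field}"
  assumes p: "p \<in> {L<..n} \<times> UNIV" "y p \<noteq> 0"
  shows "card (shift_orthogonal L n y) \<le> CARD('a) ^ (n * CARD('m) - L)"
proof -
  define m0 where "m0 = snd p"
  define K where "K = {k \<in> {L<..n}. y (k, m0) \<noteq> 0}"
  define ks where "ks = Max K"
  have "fst p \<in> K" using p by (auto simp: K_def m0_def)
  then have "ks \<in> K" unfolding ks_def by (intro Max_in) (auto simp: K_def)
  then have pivot: "ks \<in> {L<..n}" "y (ks, m0) \<noteq> 0" by (simp_all add: K_def)
  have pivot_last: "k \<le> ks" if "k \<in> {L<..n}" "y (k, m0) \<noteq> 0" for k
    using that unfolding ks_def by (intro Max_ge) (auto simp: K_def)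
  define P where "P = (\<lambda>i. (ks - i, m0)) ` {1..L}"
  define D where "D = {1..n} \<times> (UNIV :: 'm set) - P"
  have "P \<subseteq> {1..n} \<times> UNIV" using pivot(1) by (auto simp: P_def)
  moreover have "card P = L"
    unfolding P_def using pivot(1) by (subst card_image) (auto simp: inj_on_def)
  ultimately have card_D: "card D = n * CARD('m) - L"
    unfolding D_def by (simp add: card_Diff_subset finite_subset card_cartesian_product)
  define g where "g x = restrict (\<lambda>p. x (fst p) (snd p) :: 'a) D" for x :: "nat \<Rightarrow> 'm \<Rightarrow> 'a"
  have "inj_on g (shift_orthogonal L n y)"
  proof (rule inj_onI)
    fix x x' assume x: "x \<in> shift_orthogonal L n y" and x': "x' \<in> shift_orthogonal L n y"
      and "g x = g x'"
    show "x = x'"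
    proof (rule shift_orthogonal_eqI[OF x x' pivot pivot_last])
      show "x k m = x' k m" if "k \<in> {1..n}" "(k, m) \<notin> (\<lambda>i. (ks - i, m0)) ` {1..L}" for k m
        using fun_cong[OF \<open>g x = g x'\<close>, of "(k, m)"] that by (simp add: g_def D_def P_def)
    qed
  qed
  moreover have "g ` shift_orthogonal L n y \<subseteq> D \<rightarrow>\<^sub>E UNIV" by (auto simp: g_def)
  moreover have "finite (D \<rightarrow>\<^sub>E (UNIV :: 'a set))" by (intro finite_PiE) (auto simp: D_def)
  ultimately have "card (shift_orthogonal L n y) \<le> card (D \<rightarrow>\<^sub>E (UNIV :: 'a set))"
    by (rule card_inj_on_le)
  also have "\<dots> = CARD('a) ^ (n * CARD('m) - L)"
    using card_D by (simp add: card_PiE D_def)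
  finally show ?thesis .
qed

lemma card_not_lfsr_generates_le:
  "card {x \<in> {1..n} \<rightarrow>\<^sub>E UNIV. \<not> lfsr_generates L n (x :: nat \<Rightarrow> 'm::finite \<Rightarrow> 'a::{finite,field})}
     \<le> CARD('a) ^ ((n - L) * CARD('m)) * CARD('a) ^ (n * CARD('m) - L)"
proof -
  let ?R = "{L<..n} \<times> (UNIV :: 'm set)"
  let ?X = "{x \<in> {1..n} \<rightarrow>\<^sub>E UNIV. \<not> lfsr_generates L n (x :: nat \<Rightarrow> 'm \<Rightarrow> 'a)}"
  let ?Y = "{y \<in> ?R \<rightarrow>\<^sub>E (UNIV :: 'a set). \<exists>p\<in>?R. y p \<noteq> 0}"
  have fin_Y: "finite ?Y" by (rule finite_subset[of _ "?R \<rightarrow>\<^sub>E UNIV"]) (auto intro: finite_PiE)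
  have "x \<in> (\<Union>y\<in>?Y. shift_orthogonal L n y)"
    if "x \<in> {1..n} \<rightarrow>\<^sub>E UNIV" "\<not> lfsr_generates L n x" for x
    by (rule shift_orthogonal_if_not_lfsr_generates[OF that]) blast
  then have "?X \<subseteq> (\<Union>y\<in>?Y. shift_orthogonal L n y)"
    by blast
  moreover have "finite (\<Union>y\<in>?Y. shift_orthogonal L n y)"
    using fin_Y by (auto intro: finite_subset[OF _ finite_PiE] simp: shift_orthogonal_def)
  ultimately have "card ?X \<le> card (\<Union>y\<in>?Y. shift_orthogonal L n y)"
    by (rule card_mono[rotated])
  also have "\<dots> \<le> (\<Sum>y\<in>?Y. card (shift_orthogonal L n y))" by (rule card_UN_le[OF fin_Y])
  also have "\<dots> \<le> (\<Sum>y\<in>?Y. CARD('a) ^ (n * CARD('m) - L))"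
    by (rule sum_mono) (auto intro: card_shift_orthogonal_le)
  also have "\<dots> \<le> card (?R \<rightarrow>\<^sub>E (UNIV :: 'a set)) * CARD('a) ^ (n * CARD('m) - L)"
    by (simp add: card_mono finite_PiE)
  also have "card (?R \<rightarrow>\<^sub>E (UNIV :: 'a set)) = CARD('a) ^ ((n - L) * CARD('m))"
    by (simp add: card_PiE card_cartesian_product)
  finally show ?thesis .
qed

lemma card_finite_field_ge_2: "2 \<le> CARD('a::{finite,field})"
proof -
  have "card {0::'a, 1} \<le> CARD('a)" by (rule card_mono) auto
  then show ?thesis by simp
qed

lemma power_divide_power_eq_powr: "0 < q \<Longrightarrow> q ^ a / q ^ b = q powr (real a - real b)"
  for q :: real
  by (simp add: powr_diff powr_realpow)

lemma less_nat_floor_add_one: "0 \<le> t \<Longrightarrow> t < real (nat \<lfloor>t\<rfloor>) + 1"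
  using real_of_int_floor_add_one_gt[of t] by simp

lemma card_lin_compl_le_bound:
  "real (card {x \<in> {1..n} \<rightarrow>\<^sub>E UNIV. lin_compl (x :: nat \<Rightarrow> 'm::finite \<Rightarrow> 'a::{finite,field}) n \<le> L})
      / real CARD('m \<Rightarrow> 'a) ^ n
    \<le> real CARD('a) powr ((real CARD('m) + 1) * real L - real CARD('m) * real n)"
proof -
  let ?q = "CARD('a)" and ?M = "CARD('m)"
  have "card {x \<in> {1..n} \<rightarrow>\<^sub>E UNIV. lin_compl (x :: nat \<Rightarrow> 'm \<Rightarrow> 'a) n \<le> L} \<le> ?q ^ (L + ?M * L)"
    using card_lfsr_generates_le[where 'm='m and 'a='a, of n L]
    by (simp add: lin_compl_le_iff card_fun power_add power_mult)
  then have "real (card {x \<in> {1..n} \<rightarrow>\<^sub>E UNIV. lin_compl (x :: nat \<Rightarrow> 'm \<Rightarrow> 'a) n \<le> L})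
      / real CARD('m \<Rightarrow> 'a) ^ n \<le> real ?q ^ (L + ?M * L) / real ?q ^ (?M * n)"
    by (simp add: card_fun power_mult divide_right_mono flip: of_nat_power)
  also have "\<dots> = real ?q powr ((real ?M + 1) * real L - real ?M * real n)"
    by (simp add: power_divide_power_eq_powr algebra_simps)
  finally show ?thesis .
qed

lemma card_lin_compl_gt_bound:
  "real (card {x \<in> {1..n} \<rightarrow>\<^sub>E UNIV. L < lin_compl (x :: nat \<Rightarrow> 'm::finite \<Rightarrow> 'a::{finite,field}) n})
      / real CARD('m \<Rightarrow> 'a) ^ n
    \<le> real CARD('a) powr (real CARD('m) * real n - (real CARD('m) + 1) * real L)"
proof (cases "L \<le> n")
  case False
  have "\<not> L < lin_compl x n" for x :: "nat \<Rightarrow> 'm \<Rightarrow> 'a"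
    using lin_compl_le_length[of x n] False by linarith
  then have empty: "{x \<in> {1..n} \<rightarrow>\<^sub>E UNIV. L < lin_compl (x :: nat \<Rightarrow> 'm \<Rightarrow> 'a) n} = {}"
    by blast
  show ?thesis unfolding empty by simp
next
  case True
  let ?q = "CARD('a)" and ?M = "CARD('m)"
  have "card {x \<in> {1..n} \<rightarrow>\<^sub>E UNIV. L < lin_compl (x :: nat \<Rightarrow> 'm \<Rightarrow> 'a) n}
      \<le> ?q ^ ((n - L) * ?M + (n * ?M - L))"
    using card_not_lfsr_generates_le[where 'm='m and 'a='a, of n L]
    by (simp add: lin_compl_le_iff not_le[symmetric] power_add)
  then have "real (card {x \<in> {1..n} \<rightarrow>\<^sub>E UNIV. L < lin_compl (x :: nat \<Rightarrow> 'm \<Rightarrow> 'a) n})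
      / real CARD('m \<Rightarrow> 'a) ^ n \<le> real ?q ^ ((n - L) * ?M + (n * ?M - L)) / real ?q ^ (?M * n)"
    by (simp add: card_fun power_mult divide_right_mono flip: of_nat_power)
  also have "\<dots> = real ?q powr (real ?M * real n - (real ?M + 1) * real L)"
  proof -
    have "L \<le> n * ?M" using True order_trans[of L n "n * ?M"] by simp
    then have "real (n * ?M - L) = real n * real ?M - real L" by (simp add: of_nat_diff)
    moreover have "real ((n - L) * ?M) = (real n - real L) * real ?M" using True by (simp add: of_nat_diff)
    ultimately have "real ((n - L) * ?M + (n * ?M - L)) - real (?M * n)
        = real ?M * real n - (real ?M + 1) * real L"
      unfolding of_nat_add by (simp add: algebra_simps)
    then show ?thesis
      by (simp only: power_divide_power_eq_powr[of "real ?q"] zero_less_card_finite of_nat_0_less_iff)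
  qed
  finally show ?thesis .
qed

section \<open>Almost sure asymptotics\<close>

lemma AE_eventually_lin_compl_ge:
  assumes "0 < \<epsilon>"
  shows "AE a in uniform_sequences. eventually (\<lambda>n.
    (real CARD('m) / (real CARD('m) + 1) - \<epsilon>) * real n
      \<le> real (lin_compl (a :: nat \<Rightarrow> 'm::finite \<Rightarrow> 'a::{finite,field}) n)) sequentially"
proof (cases "real CARD('m) / (real CARD('m) + 1) - \<epsilon> \<le> 0")
  case True
  have "(real CARD('m) / (real CARD('m) + 1) - \<epsilon>) * real n \<le> real (lin_compl a n)"
    for a :: "nat \<Rightarrow> 'm \<Rightarrow> 'a" and n
    using mult_nonpos_nonneg[OF True, of "real n"] by (meson of_nat_0_le_iff order_trans)
  then show ?thesis by simp
next
  case False
  define M where "M = real CARD('m)"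
  define \<beta> where "\<beta> = M / (M + 1) - \<epsilon>"
  define q where "q = real CARD('a)"
  define L where "L n = nat \<lfloor>\<beta> * real n\<rfloor>" for n
  define S where "S n = {x \<in> {1..n} \<rightarrow>\<^sub>E UNIV. lin_compl (x :: nat \<Rightarrow> 'm \<Rightarrow> 'a) n \<le> L n}" for n
  have \<beta>: "0 < \<beta>" "(M + 1) * \<beta> = M - (M + 1) * \<epsilon>"
    using False by (simp_all add: \<beta>_def M_def field_simps)
  have q: "1 < q" using card_finite_field_ge_2[where 'a='a] by (simp add: q_def)
  define r where "r = q powr (- (M + 1) * \<epsilon>)"
  have r: "0 \<le> r" "r < 1"
    using q assms unfolding r_def by (auto intro!: powr_less_one mult_neg_pos simp: M_def)
  have bound: "real (card (S n)) / real CARD('m \<Rightarrow> 'a) ^ n \<le> 1 * r ^ n" for n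
  proof -
    have "(M + 1) * real (L n) \<le> ((M + 1) * \<beta>) * real n"
      using \<beta>(1) unfolding mult.assoc by (simp add: L_def M_def of_nat_floor)
    then have "(M + 1) * real (L n) - M * real n \<le> real n * (- (M + 1) * \<epsilon>)"
      unfolding \<beta>(2) by (simp add: algebra_simps)
    then have "q powr ((M + 1) * real (L n) - M * real n) \<le> r ^ n"
      using q by (simp add: r_def powr_power)
    with card_lin_compl_le_bound[where 'm='m and 'a='a, of n "L n"] show ?thesis
      unfolding S_def M_def q_def by linarith
  qed
  have "AE a in uniform_sequences. eventually (\<lambda>n. restrict a {1..n} \<notin> S n) sequentially"
    by (rule AE_eventually_restrict_notin_geometric[OF _ bound r]) (auto simp: S_def)
  then show ?thesis
  proof (rule eventually_mono, elim eventually_mono)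
    fix a :: "nat \<Rightarrow> 'm \<Rightarrow> 'a" and n assume "restrict a {1..n} \<notin> S n"
    then have "\<not> lin_compl (restrict a {1..n}) n \<le> L n" by (auto simp: S_def)
    then have "L n < lin_compl a n" unfolding lin_compl_restrict by simp
    moreover have "\<beta> * real n < real (L n) + 1"
      unfolding L_def using \<beta>(1) by (intro less_nat_floor_add_one) simp
    ultimately show "(real CARD('m) / (real CARD('m) + 1) - \<epsilon>) * real n \<le> real (lin_compl a n)"
      unfolding \<beta>_def M_def by linarith
  qed
qed

lemma AE_eventually_lin_compl_le:
  assumes "0 < \<epsilon>"
  shows "AE a in uniform_sequences. eventually (\<lambda>n.
    real (lin_compl (a :: nat \<Rightarrow> 'm::finite \<Rightarrow> 'a::{finite,field}) n)
      \<le> (real CARD('m) / (real CARD('m) + 1) + \<epsilon>) * real n) sequentially"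
proof -
  define M where "M = real CARD('m)"
  define \<beta> where "\<beta> = M / (M + 1) + \<epsilon>"
  define q where "q = real CARD('a)"
  define L where "L n = nat \<lfloor>\<beta> * real n\<rfloor>" for n
  define S where "S n = {x \<in> {1..n} \<rightarrow>\<^sub>E UNIV. L n < lin_compl (x :: nat \<Rightarrow> 'm \<Rightarrow> 'a) n}" for n
  have \<beta>: "0 < \<beta>" "(M + 1) * \<beta> = M + (M + 1) * \<epsilon>"
    using assms by (simp_all add: \<beta>_def M_def field_simps add_pos_nonneg)
  have q: "1 < q" using card_finite_field_ge_2[where 'a='a] by (simp add: q_def)
  define r where "r = q powr (- (M + 1) * \<epsilon>)"
  have r: "0 \<le> r" "r < 1"
    using q assms unfolding r_def by (auto intro!: powr_less_one mult_neg_pos simp: M_def)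
  have bound: "real (card (S n)) / real CARD('m \<Rightarrow> 'a) ^ n \<le> q powr (M + 1) * r ^ n" for n
  proof -
    have "((M + 1) * \<beta>) * real n < (M + 1) * (real (L n) + 1)"
      using less_nat_floor_add_one[of "\<beta> * real n"] \<beta>(1) unfolding mult.assoc
      by (simp add: L_def M_def)
    then have "M * real n - (M + 1) * real (L n) \<le> (M + 1) + real n * (- (M + 1) * \<epsilon>)"
      unfolding \<beta>(2) by (simp add: algebra_simps)
    then have "q powr (M * real n - (M + 1) * real (L n)) \<le> q powr (M + 1) * r ^ n"
      using q by (simp add: r_def powr_power flip: powr_add)
    with card_lin_compl_gt_bound[where 'm='m and 'a='a, of n "L n"] show ?thesis
      unfolding S_def M_def q_def by linarith
  qed
  have "AE a in uniform_sequences. eventually (\<lambda>n. restrict a {1..n} \<notin> S n) sequentially"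
    by (rule AE_eventually_restrict_notin_geometric[OF _ bound r]) (auto simp: S_def)
  then show ?thesis
  proof (rule eventually_mono, elim eventually_mono)
    fix a :: "nat \<Rightarrow> 'm \<Rightarrow> 'a" and n assume "restrict a {1..n} \<notin> S n"
    then have "lin_compl (restrict a {1..n}) n \<le> L n" by (auto simp: S_def)
    then have "lin_compl a n \<le> L n" unfolding lin_compl_restrict .
    moreover have "real (L n) \<le> \<beta> * real n"
      unfolding L_def using \<beta>(1) by (intro of_nat_floor) simp
    ultimately show "real (lin_compl a n) \<le> (real CARD('m) / (real CARD('m) + 1) + \<epsilon>) * real n"
      unfolding \<beta>_def M_def by linarith
  qed
qed

lemma AE_LIMSEQ_if_AE_eventually_dist_le:
  fixes f :: "'b \<Rightarrow> nat \<Rightarrow> 'c::metric_space"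
  assumes "\<And>\<epsilon>. 0 < \<epsilon> \<Longrightarrow> AE x in M. eventually (\<lambda>n. dist (f x n) l \<le> \<epsilon>) sequentially"
  shows "AE x in M. f x \<longlonglongrightarrow> l"
proof -
  have "AE x in M. \<forall>j::nat. eventually (\<lambda>n. dist (f x n) l \<le> inverse (real (Suc j))) sequentially"
    unfolding AE_all_countable by (intro allI assms) simp
  then show ?thesis
  proof (rule eventually_mono)
    fix x assume close: "\<forall>j::nat. eventually (\<lambda>n. dist (f x n) l \<le> inverse (real (Suc j))) sequentially"
    show "f x \<longlonglongrightarrow> l"
    proof (rule tendstoI)
      fix e :: real assume "0 < e"
      then obtain j where "inverse (real (Suc j)) < e" using reals_Archimedean by blast
      with close[rule_format, of j] show "eventually (\<lambda>n. dist (f x n) l < e) sequentially"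
        by (elim eventually_mono) linarith
    qed
  qed
qed

lemma dist_divide_le_if_bounds:
  fixes x \<alpha> \<epsilon> n :: real
  assumes "0 < n" "(\<alpha> - \<epsilon>) * n \<le> x" "x \<le> (\<alpha> + \<epsilon>) * n"
  shows "dist (x / n) \<alpha> \<le> \<epsilon>"
proof -
  have "\<alpha> - \<epsilon> \<le> x / n" "x / n \<le> \<alpha> + \<epsilon>"
    using assms by (simp_all add: pos_le_divide_eq pos_divide_le_eq)
  then show ?thesis by (simp add: dist_real_def abs_le_iff)
qed

theorem mainTheorem16:
  "AE a in (\<Pi>\<^sub>M k\<in>{1::nat..}. measure_pmf (pmf_of_set (UNIV :: ('m::finite \<Rightarrow> 'a::{finite,field}) set))).
     (\<lambda>n. real (lin_compl a n) / real n) \<longlonglongrightarrow> real CARD('m) / (real CARD('m) + 1)"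
proof (rule AE_LIMSEQ_if_AE_eventually_dist_le)
  fix \<epsilon> :: real assume "0 < \<epsilon>"
  let ?\<alpha> = "real CARD('m) / (real CARD('m) + 1)"
  show "AE a in uniform_sequences. eventually (\<lambda>n.
      dist (real (lin_compl (a :: nat \<Rightarrow> 'm \<Rightarrow> 'a) n) / real n) ?\<alpha> \<le> \<epsilon>) sequentially"
    using AE_eventually_lin_compl_ge[OF \<open>0 < \<epsilon>\<close>] AE_eventually_lin_compl_le[OF \<open>0 < \<epsilon>\<close>]
  proof eventually_elim
    case (elim a)
    with eventually_ge_at_top[of 1] show ?case
      by eventually_elim (auto intro: dist_divide_le_if_bounds)
  qed
qed

end
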